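(* Let $G$ be a graph with an assignment $g\colon V(G)\to\mathbb{N}$ (positive integers), and let $v\in V(G)$. Let $G':=G-v$ and let $g'\colon V(G')\to\mathbb{N}$ be such that $g'(x)=g(x)$ for every $x\in V(G)\setminus(\{v\}\cup N_G(v))$. If for some integer $q>\mathrm{HG}_{g'}(G')$ we have \[\frac{g(v)}{q}+\sum_{w\in N_G(v)}\frac{g(w)}{g'(w)+1}<1,\] then $q>\mathrm{HG}_g(G)$.
   Context: Multiple-guess hat game: for a graph $G$, an assignment $g\colon V(G)\to\mathbb{N}$ of positive integers and $q$ colours, a strategy is a family $(f_v)_{v\in V(G)}$ where $f_v\colon[q]^{N_G(v)}\to\binom{[q]}{\le g(v)}$ assigns to each colouring of the neighbourhood of $v$ a set of at most $g(v)$ colours. The strategy is winning if for every colouring $c\colon V(G)\to[q]$ there is $v\in V(G)$ with $c(v)\in f_v((c(w))_{w\in N_G(v)})$. $\mathrm{HG}_g(G)$ is the largest $q$ for which a winning strategy exists. *)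

theory Defs
  imports Complex_Main "HOL-Library.FuncSet"
begin

definition simple_graph :: "'a set \<Rightarrow> ('a \<Rightarrow> 'a \<Rightarrow> bool) \<Rightarrow> bool" where
  "simple_graph V E \<longleftrightarrow> finite V \<and> (\<forall>x y. E x y \<longrightarrow> E y x) \<and> (\<forall>x. \<not> E x x)
     \<and> (\<forall>x y. E x y \<longrightarrow> x \<in> V \<and> y \<in> V)"

definition nbhd :: "'a set \<Rightarrow> ('a \<Rightarrow> 'a \<Rightarrow> bool) \<Rightarrow> 'a \<Rightarrow> 'a set" where
  "nbhd V E x = {w \<in> V. E x w}"

definition del_vertex_edges :: "('a \<Rightarrow> 'a \<Rightarrow> bool) \<Rightarrow> 'a \<Rightarrow> 'a \<Rightarrow> 'a \<Rightarrow> bool" where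
  "del_vertex_edges E v = (\<lambda>x y. E x y \<and> x \<noteq> v \<and> y \<noteq> v)"

text \<open>Colours are [q] = {0..<q}. A strategy assigns to each vertex x and each colouring
of N(x) (an extensional function N(x) \<rightarrow> [q]) a set of at most g(x) colours.\<close>
definition is_strategy :: "'a set \<Rightarrow> ('a \<Rightarrow> 'a \<Rightarrow> bool) \<Rightarrow> ('a \<Rightarrow> nat) \<Rightarrow> nat
    \<Rightarrow> ('a \<Rightarrow> ('a \<Rightarrow> nat) \<Rightarrow> nat set) \<Rightarrow> bool" where
  "is_strategy V E g q f \<longleftrightarrow>
     (\<forall>x\<in>V. \<forall>c\<in>nbhd V E x \<rightarrow>\<^sub>E {..<q}. f x c \<subseteq> {..<q} \<and> card (f x c) \<le> g x)"

definition is_winning :: "'a set \<Rightarrow> ('a \<Rightarrow> 'a \<Rightarrow> bool) \<Rightarrow> ('a \<Rightarrow> nat) \<Rightarrow> nat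
    \<Rightarrow> ('a \<Rightarrow> ('a \<Rightarrow> nat) \<Rightarrow> nat set) \<Rightarrow> bool" where
  "is_winning V E g q f \<longleftrightarrow> is_strategy V E g q f \<and>
     (\<forall>c\<in>V \<rightarrow>\<^sub>E {..<q}. \<exists>x\<in>V. c x \<in> f x (restrict c (nbhd V E x)))"

definition has_winning :: "'a set \<Rightarrow> ('a \<Rightarrow> 'a \<Rightarrow> bool) \<Rightarrow> ('a \<Rightarrow> nat) \<Rightarrow> nat \<Rightarrow> bool" where
  "has_winning V E g q \<longleftrightarrow> (\<exists>f. is_winning V E g q f)"

definition HG :: "'a set \<Rightarrow> ('a \<Rightarrow> 'a \<Rightarrow> bool) \<Rightarrow> ('a \<Rightarrow> nat) \<Rightarrow> nat" where
  "HG V E g = Sup {q. has_winning V E g q}"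

end

theory Submission
  imports Defs
begin

text \<open>Suppose f is a winning strategy on G with q colours. In G - v, let every neighbour x of v
guess those colours b that f x, seeing the rest of its neighbourhood, guesses for more than a
fraction g x / (g' x + 1) of the q possible colours of v; by Markov's inequality there are at
most g' x of them, and all other vertices play as in f. Since q > HG_g'(G - v), this strategy
loses against some colouring c' of G - v. Now extend c' by a colour for v: it is guessed by v
itself for at most g v choices, and by a neighbour w for at most q g w / (g' w + 1) choices.
By the hypothesis these are fewer than q bad choices in total, so some extension defeats f.\<close>

lemma card_above_threshold_le:
  fixes m :: "'b \<Rightarrow> nat"
  assumes "finite B" and "(\<Sum>b\<in>B. m b) \<le> T"
  shows "card {b\<in>B. T < m b * (k + 1)} \<le> k"
proof (rule ccontr)
  define S where "S = {b\<in>B. T < m b * (k + 1)}"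
  have sum_S: "(\<Sum>b\<in>S. m b) \<le> T"
    using sum_mono2[of B S m] assms by (auto simp: S_def)
  assume "\<not> card {b\<in>B. T < m b * (k + 1)} \<le> k"
  then have "k + 1 \<le> card S" by (simp add: S_def)
  then have "(k + 1) * (T + 1) \<le> card S * (T + 1)" by (rule mult_right_mono) simp
  also have "\<dots> = (\<Sum>b\<in>S. T + 1)" by simp
  also have "\<dots> \<le> (\<Sum>b\<in>S. m b * (k + 1))"
    by (rule sum_mono) (auto simp: S_def)
  also have "\<dots> = (k + 1) * (\<Sum>b\<in>S. m b)" by (simp add: sum_distrib_left mult.commute)
  also have "\<dots> \<le> (k + 1) * T" using sum_S by (rule mult_left_mono) simp
  finally show False by simp
qed

lemma sum_card_incidences:
  assumes "finite A" and "finite B" and "\<forall>a\<in>A. F a \<subseteq> B"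
  shows "(\<Sum>b\<in>B. card {a\<in>A. b \<in> F a}) = (\<Sum>a\<in>A. card (F a))"
proof -
  have "(\<Sum>b\<in>B. card {a\<in>A. b \<in> F a}) = (\<Sum>b\<in>B. \<Sum>a\<in>A. if b \<in> F a then 1 else 0)"
    using assms by (simp add: sum.If_cases Int_def)
  also have "\<dots> = (\<Sum>a\<in>A. \<Sum>b\<in>B. if b \<in> F a then 1 else 0)" by (rule sum.swap)
  also have "\<dots> = (\<Sum>a\<in>A. card (F a))"
  proof (rule sum.cong)
    fix a assume "a \<in> A"
    then have "B \<inter> F a = F a" using assms by auto
    then show "(\<Sum>b\<in>B. if b \<in> F a then 1 else 0) = card (F a)"
      using assms by (simp add: sum.If_cases)
  qed simp
  finally show ?thesis .
qed

lemma exists_less_notin_sets: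
  assumes "finite I" and "finite B0" and "\<forall>i\<in>I. finite (B i)"
    and "card B0 + (\<Sum>i\<in>I. card (B i)) < q"
  obtains a where "a < q" and "a \<notin> B0" and "\<forall>i\<in>I. a \<notin> B i"
proof -
  define U where "U = B0 \<union> (\<Union>i\<in>I. B i)"
  have "card U \<le> card B0 + card (\<Union>i\<in>I. B i)" unfolding U_def by (rule card_Un_le)
  also have "card (\<Union>i\<in>I. B i) \<le> (\<Sum>i\<in>I. card (B i))" using assms(1) by (rule card_UN_le)
  finally have "card U < card {..<q}" using assms(4) by simp
  moreover have "finite U" unfolding U_def using assms(1-3) by blast
  ultimately have "\<not> {..<q} \<subseteq> U" by (metis card_mono leD)
  then show ?thesis using that unfolding U_def by blast
qed

lemma simple_graph_del_vertex:
  "simple_graph V E \<Longrightarrow> simple_graph (V - {v}) (del_vertex_edges E v)"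
  unfolding simple_graph_def del_vertex_edges_def by auto

lemma finite_nbhd: "simple_graph V E \<Longrightarrow> finite (nbhd V E x)"
  unfolding simple_graph_def nbhd_def by simp

lemma mem_nbhd_iff: "simple_graph V E \<Longrightarrow> v \<in> nbhd V E x \<longleftrightarrow> E v x"
  unfolding simple_graph_def nbhd_def by blast

lemma nbhd_del_vertex:
  "x \<noteq> v \<Longrightarrow> nbhd (V - {v}) (del_vertex_edges E v) x = nbhd V E x - {v}"
  unfolding nbhd_def del_vertex_edges_def by auto

lemma is_strategyD:
  assumes "is_strategy V E g q f" and "x \<in> V" and "c \<in> nbhd V E x \<rightarrow>\<^sub>E {..<q}"
  shows "f x c \<subseteq> {..<q}" and "card (f x c) \<le> g x"
  using assms unfolding is_strategy_def by blast+

definition guess_count ::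
    "('a \<Rightarrow> ('a \<Rightarrow> nat) \<Rightarrow> nat set) \<Rightarrow> 'a \<Rightarrow> nat \<Rightarrow> 'a \<Rightarrow> ('a \<Rightarrow> nat) \<Rightarrow> nat \<Rightarrow> nat" where
  "guess_count f v q x d b = card {a\<in>{..<q}. b \<in> f x (d(v := a))}"

definition reduced_strategy ::
    "('a \<Rightarrow> 'a \<Rightarrow> bool) \<Rightarrow> 'a \<Rightarrow> ('a \<Rightarrow> nat) \<Rightarrow> ('a \<Rightarrow> nat) \<Rightarrow> nat
      \<Rightarrow> ('a \<Rightarrow> ('a \<Rightarrow> nat) \<Rightarrow> nat set) \<Rightarrow> 'a \<Rightarrow> ('a \<Rightarrow> nat) \<Rightarrow> nat set" where
  "reduced_strategy E v g g' q f x d =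
     (if E v x then {b\<in>{..<q}. q * g x < guess_count f v q x d b * (g' x + 1)} else f x d)"

lemma sum_guess_count_le:
  assumes "\<forall>a<q. f x (d(v := a)) \<subseteq> {..<q} \<and> card (f x (d(v := a))) \<le> g x"
  shows "(\<Sum>b<q. guess_count f v q x d b) \<le> q * g x"
proof -
  have "(\<Sum>b<q. guess_count f v q x d b) = (\<Sum>a<q. card (f x (d(v := a))))"
    unfolding guess_count_def by (rule sum_card_incidences) (use assms in auto)
  also have "\<dots> \<le> q * g x"
    using sum_bounded_above[of "{..<q}" "\<lambda>a. card (f x (d(v := a)))" "g x"] assms by auto
  finally show ?thesis .
qed

lemma is_strategy_reduced_strategy:
  assumes G: "simple_graph V E" and "v \<in> V"
    and agree: "\<forall>x\<in>V - ({v} \<union> nbhd V E v). g' x = g x"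
    and f: "is_strategy V E g q f"
  shows "is_strategy (V - {v}) (del_vertex_edges E v) g' q (reduced_strategy E v g g' q f)"
  unfolding is_strategy_def
proof (intro ballI)
  fix x d
  assume x: "x \<in> V - {v}" and d: "d \<in> nbhd (V - {v}) (del_vertex_edges E v) x \<rightarrow>\<^sub>E {..<q}"
  have nbhd_x: "nbhd (V - {v}) (del_vertex_edges E v) x = nbhd V E x - {v}"
    using x by (simp add: nbhd_del_vertex)
  show "reduced_strategy E v g g' q f x d \<subseteq> {..<q}
      \<and> card (reduced_strategy E v g g' q f x d) \<le> g' x"
  proof (cases "E v x")
    case True
    have "insert v (nbhd V E x - {v}) = nbhd V E x" using True G by (auto simp: mem_nbhd_iff)
    then have "d(v := a) \<in> nbhd V E x \<rightarrow>\<^sub>E {..<q}" if "a < q" for a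
      using d that nbhd_x by (metis PiE_fun_upd lessThan_iff)
    then have "\<forall>a<q. f x (d(v := a)) \<subseteq> {..<q} \<and> card (f x (d(v := a))) \<le> g x"
      using is_strategyD[OF f] x by blast
    then have "(\<Sum>b<q. guess_count f v q x d b) \<le> q * g x" by (rule sum_guess_count_le)
    then have "card {b\<in>{..<q}. q * g x < guess_count f v q x d b * (g' x + 1)} \<le> g' x"
      by (rule card_above_threshold_le[OF finite_lessThan])
    then show ?thesis using True by (auto simp: reduced_strategy_def)
  next
    case False
    then have "nbhd V E x - {v} = nbhd V E x" using G by (auto simp: mem_nbhd_iff)
    moreover have "g' x = g x" using False x agree by (simp add: nbhd_def)
    ultimately show ?thesis
      using False f x d nbhd_x by (simp add: reduced_strategy_def is_strategy_def)
  qed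
qed

lemma card_guessed_by_neighbour:
  assumes G: "simple_graph V E" and w: "w \<in> nbhd V E v" and "c' w < q"
    and lose: "c' w \<notin> reduced_strategy E v g g' q f w
                 (restrict c' (nbhd (V - {v}) (del_vertex_edges E v) w))"
  shows "card {a\<in>{..<q}. c' w \<in> f w (restrict (c'(v := a)) (nbhd V E w))} * (g' w + 1) \<le> q * g w"
proof -
  define d where "d = restrict c' (nbhd (V - {v}) (del_vertex_edges E v) w)"
  have "E v w" "w \<noteq> v" using w G unfolding nbhd_def simple_graph_def by auto
  then have "v \<in> nbhd V E w" using G by (simp add: mem_nbhd_iff)
  then have "restrict (c'(v := a)) (nbhd V E w) = d(v := a)" for a
    using \<open>w \<noteq> v\<close> by (auto simp: d_def nbhd_del_vertex)
  then show ?thesis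
    using lose \<open>E v w\<close> \<open>c' w < q\<close>
    by (simp add: d_def [symmetric] reduced_strategy_def guess_count_def)
qed

lemma losing_colouring_extends:
  assumes G: "simple_graph V E" and v: "v \<in> V" and f: "is_strategy V E g q f" and "q > 0"
    and c': "c' \<in> (V - {v}) \<rightarrow>\<^sub>E {..<q}"
    and lose: "\<forall>x\<in>V - {v}. c' x \<notin> reduced_strategy E v g g' q f x
                 (restrict c' (nbhd (V - {v}) (del_vertex_edges E v) x))"
    and ineq: "real (g v) / real q + (\<Sum>w\<in>nbhd V E v. real (g w) / real (g' w + 1)) < 1"
  obtains a where "a < q" and "\<forall>x\<in>V. (c'(v := a)) x \<notin> f x (restrict (c'(v := a)) (nbhd V E x))"
proof -
  define N where "N = nbhd V E"
  define B0 where "B0 = {a\<in>{..<q}. a \<in> f v (restrict c' (N v))}"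
  define B where "B w = {a\<in>{..<q}. c' w \<in> f w (restrict (c'(v := a)) (N w))}" for w
  have v_notin: "v \<notin> N v" and N_sub: "N v \<subseteq> V - {v}"
    using G unfolding N_def nbhd_def simple_graph_def by auto
  have "restrict c' (N v) \<in> N v \<rightarrow>\<^sub>E {..<q}" using c' N_sub by auto
  then have guesses_v: "f v (restrict c' (N v)) \<subseteq> {..<q}" "card (f v (restrict c' (N v))) \<le> g v"
    using is_strategyD[OF f v] unfolding N_def by blast+
  have "card B0 \<le> card (f v (restrict c' (N v)))"
    using guesses_v(1) unfolding B0_def by (intro card_mono) (auto intro: finite_subset)
  then have B0_le: "real (card B0) \<le> real (g v)" using guesses_v(2) by simp
  have B_le: "real (card (B w)) \<le> real q * real (g w) / real (g' w + 1)" if w: "w \<in> N v" for w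
  proof -
    have "w \<in> V - {v}" "c' w < q" using w N_sub c' by auto
    then have "card (B w) * (g' w + 1) \<le> q * g w"
      unfolding B_def N_def using card_guessed_by_neighbour[OF G] w lose by (simp add: N_def)
    then have "real (card (B w) * (g' w + 1)) \<le> real (q * g w)" by (simp only: of_nat_le_iff)
    then show ?thesis by (simp add: field_simps)
  qed
  have "real (card B0) + (\<Sum>w\<in>N v. real (card (B w)))
      \<le> real (g v) + (\<Sum>w\<in>N v. real q * real (g w) / real (g' w + 1))"
    by (intro add_mono sum_mono B0_le B_le)
  also have "\<dots> = real q * (real (g v) / real q + (\<Sum>w\<in>N v. real (g w) / real (g' w + 1)))"
    using \<open>q > 0\<close> by (simp add: distrib_left sum_distrib_left)
  also have "\<dots> < real q" using ineq \<open>q > 0\<close> by (simp add: N_def)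
  finally have "real (card B0 + (\<Sum>w\<in>N v. card (B w))) < real q" by simp
  then have "card B0 + (\<Sum>w\<in>N v. card (B w)) < q" by (simp only: of_nat_less_iff)
  moreover have "finite B0" "\<forall>w\<in>N v. finite (B w)" by (simp_all add: B0_def B_def)
  ultimately obtain a where a: "a < q" "a \<notin> B0" "\<forall>w\<in>N v. a \<notin> B w"
    using exists_less_notin_sets[OF finite_nbhd[OF G, of v, folded N_def]] by blast
  have "(c'(v := a)) x \<notin> f x (restrict (c'(v := a)) (N x))" if x: "x \<in> V" for x
  proof (cases "x = v")
    case True
    then show ?thesis using a v_notin by (simp add: B0_def)
  next
    case x_ne_v: False
    show ?thesis
    proof (cases "E v x")
      case True
      then show ?thesis using a x x_ne_v by (simp add: B_def N_def nbhd_def)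
    next
      case False
      then have "v \<notin> N x" using G by (simp add: N_def mem_nbhd_iff)
      then have "restrict (c'(v := a)) (N x) = restrict c' (nbhd (V - {v}) (del_vertex_edges E v) x)"
        using x_ne_v by (simp add: N_def nbhd_del_vertex)
      moreover have "c' x \<notin> f x (restrict c' (nbhd (V - {v}) (del_vertex_edges E v) x))"
        using lose[rule_format, of x] x x_ne_v False by (simp add: reduced_strategy_def)
      ultimately show ?thesis using x_ne_v by (metis fun_upd_other)
    qed
  qed
  then show ?thesis using that a(1) unfolding N_def by blast
qed

lemma not_has_winning_del_vertex:
  assumes G: "simple_graph V E" and v: "v \<in> V"
    and agree: "\<forall>x\<in>V - ({v} \<union> nbhd V E v). g' x = g x"
    and no_win: "\<not> has_winning (V - {v}) (del_vertex_edges E v) g' q"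
    and "q > 0"
    and ineq: "real (g v) / real q + (\<Sum>w\<in>nbhd V E v. real (g w) / real (g' w + 1)) < 1"
  shows "\<not> has_winning V E g q"
proof
  assume "has_winning V E g q"
  then obtain f where f: "is_winning V E g q f" unfolding has_winning_def by blast
  then have strategy: "is_strategy V E g q f" unfolding is_winning_def by blast
  then have "is_strategy (V - {v}) (del_vertex_edges E v) g' q (reduced_strategy E v g g' q f)"
    using G v agree by (rule is_strategy_reduced_strategy [rotated 3])
  then obtain c' where c': "c' \<in> (V - {v}) \<rightarrow>\<^sub>E {..<q}"
    and lose: "\<forall>x\<in>V - {v}. c' x \<notin> reduced_strategy E v g g' q f x
                 (restrict c' (nbhd (V - {v}) (del_vertex_edges E v) x))"
    using no_win unfolding has_winning_def is_winning_def by blast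
  obtain a where "a < q" and lose_f: "\<forall>x\<in>V. (c'(v := a)) x \<notin> f x (restrict (c'(v := a)) (nbhd V E x))"
    using losing_colouring_extends[OF G v strategy \<open>q > 0\<close> c' lose ineq] by blast
  have "c'(v := a) \<in> V \<rightarrow>\<^sub>E {..<q}"
    using PiE_fun_upd[of a "\<lambda>_. {..<q}" v c' "V - {v}"] c' \<open>a < q\<close> v by (simp add: insert_absorb)
  then show False using f lose_f unfolding is_winning_def by blast
qed

text \<open>HG is a supremum in nat, which is only meaningful for a bounded set of q. Boundedness
follows from the deletion lemma itself by induction on V, giving the neighbours of v guess
budgets large enough that the sum in the hypothesis stays below 1/2.\<close>

lemma has_winning_bounded:
  assumes "simple_graph V E"
  shows "\<exists>B. \<forall>q>B. \<not> has_winning V E g q"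
  using assms
proof (induction V arbitrary: E g rule: infinite_finite_induct)
  case (infinite V)
  then show ?case by (simp add: simple_graph_def)
next
  case empty
  then show ?case by (simp add: has_winning_def is_winning_def PiE_empty_domain)
next
  case (insert v F)
  define N where "N = nbhd (insert v F) E v"
  define g' where "g' x = (if E v x then 2 * card N * g x else g x)" for x
  have G: "simple_graph (insert v F) E" by fact
  have F: "insert v F - {v} = F" using \<open>v \<notin> F\<close> by simp
  obtain B where B: "\<forall>q>B. \<not> has_winning F (del_vertex_edges E v) g' q"
    using insert.IH[OF simple_graph_del_vertex[OF G, of v, unfolded F]] by blast
  have "real (g w) / real (g' w + 1) \<le> 1 / (2 * real (card N))" if "w \<in> N" for w
  proof -
    have "E v w" "card N > 0" using that finite_nbhd[OF G] by (auto simp: N_def nbhd_def card_gt_0_iff)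
    then have "real (g w) * (2 * real (card N)) \<le> real (g' w + 1)" by (simp add: g'_def)
    then show ?thesis using \<open>card N > 0\<close> by (simp add: divide_le_eq le_divide_eq)
  qed
  then have "(\<Sum>w\<in>N. real (g w) / real (g' w + 1)) \<le> real (card N) * (1 / (2 * real (card N)))"
    by (rule sum_bounded_above)
  also have "\<dots> \<le> 1 / 2" by simp
  finally have sum_le: "(\<Sum>w\<in>N. real (g w) / real (g' w + 1)) \<le> 1 / 2" .
  have "\<not> has_winning (insert v F) E g q" if q: "q > max B (2 * g v)" for q
  proof (rule not_has_winning_del_vertex[OF G insertI1])
    show "\<forall>x\<in>insert v F - ({v} \<union> nbhd (insert v F) E v). g' x = g x"
      by (auto simp: g'_def nbhd_def)
    show "\<not> has_winning (insert v F - {v}) (del_vertex_edges E v) g' q"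
      using B q F by simp
    show "q > 0" using q by simp
    have "real (g v) / real q < 1 / 2" using q by (simp add: field_simps)
    then show "real (g v) / real q + (\<Sum>w\<in>nbhd (insert v F) E v. real (g w) / real (g' w + 1)) < 1"
      using sum_le unfolding N_def by linarith
  qed
  then show ?case by blast
qed

lemma has_winning_le_HG:
  assumes "simple_graph V E" and "has_winning V E g q"
  shows "q \<le> HG V E g"
proof -
  obtain B where "\<forall>q>B. \<not> has_winning V E g q" using has_winning_bounded[OF assms(1)] by blast
  then have "bdd_above {q. has_winning V E g q}" by (meson bdd_aboveI leI mem_Collect_eq)
  then show ?thesis unfolding HG_def using assms(2) by (simp add: cSup_upper)
qed

lemma HG_less:
  assumes "q > 0" and "\<forall>q'\<ge>q. \<not> has_winning V E g q'"
  shows "HG V E g < q"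
proof -
  define S where "S = {q. has_winning V E g q}"
  have "S \<subseteq> {..<q}" using assms(2) by (auto simp: S_def not_le[symmetric])
  then have "finite S" by (rule finite_subset) simp
  then show ?thesis
    unfolding HG_def S_def[symmetric] using \<open>S \<subseteq> {..<q}\<close> assms(1)
    by (cases "S = {}") (auto simp: finite_Sup_less_iff)
qed

theorem proposition2p1:
  fixes V :: "'a set" and E :: "'a \<Rightarrow> 'a \<Rightarrow> bool" and g g' :: "'a \<Rightarrow> nat"
    and v :: 'a and q :: nat
  assumes "simple_graph V E"
    and "v \<in> V"
    and "\<forall>x\<in>V. g x > 0"
    and "\<forall>x\<in>V - {v}. g' x > 0"
    and "\<forall>x\<in>V - ({v} \<union> nbhd V E v). g' x = g x"
    and "q > HG (V - {v}) (del_vertex_edges E v) g'"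
    and "real (g v) / real q + (\<Sum>w\<in>nbhd V E v. real (g w) / real (g' w + 1)) < 1"
  shows "q > HG V E g"
proof (rule HG_less)
  show "q > 0" using assms(6) by simp
  show "\<forall>q'\<ge>q. \<not> has_winning V E g q'"
  proof (intro allI impI)
    fix q' assume "q \<le> q'"
    then have "\<not> has_winning (V - {v}) (del_vertex_edges E v) g' q'"
      using has_winning_le_HG[OF simple_graph_del_vertex[OF assms(1)]] assms(6) by fastforce
    moreover have "real (g v) / real q' \<le> real (g v) / real q"
      using \<open>q \<le> q'\<close> \<open>q > 0\<close> by (intro divide_left_mono) auto
    ultimately show "\<not> has_winning V E g q'"
      using not_has_winning_del_vertex[OF assms(1,2,5)] assms(7) \<open>q \<le> q'\<close> \<open>q > 0\<close> by fastforce
  qed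
qed

end
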